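(* Let $\mathcal{G}_n$ be the random graph described in the context. For $\delta_n>0$, a configuration $\sigma:\mathcal{V}_n\to\{-1,1\}$, $k,l\in\{1,2\}$, $t\in\{-,+\}$ and $u\in\mathcal{V}_n^k$, let $$B_t^{k,l}(\sigma,u)=\Big\{\big|\hat Y_t^l(\sigma,u)-p_n(k,l)Y_t^l(\sigma)\big|\ge\sqrt{p_n(k,l)Y_t^l(\sigma)\delta_n}\Big\}.$$ Suppose $\gamma_n>0$, $\delta_n>0$ and $\xi_n\in(0,1)$ satisfy $$\lim_{n\to\infty}\delta_n=\infty,\qquad\lim_{n\to\infty}\frac{\delta_n}{\xi_n\lambda_n}=0,\qquad\lim_{n\to\infty}\frac{\delta_n}{\gamma_n}=\infty.$$ Fix $\zeta>0$ and $k,l\in\{1,2\}$, $s,t\in\{-,+\}$ with $(k,s)\neq(l,t)$. Then $$\max_{\sigma\in\Sigma_n(\zeta,\xi_n)}\frac{\gamma_n}{n}\sum_{u\in\mathcal{Y}_s^k(\sigma)}\mathbf{1}\{B_t^{k,l}(\sigma,u)\}\Rightarrow0\quad\text{as }n\to\infty.$$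
   Context: For each $n$, the node set $\mathcal{V}_n=\mathcal{V}_n^1\cup\mathcal{V}_n^2$ is a disjoint union of two communities of sizes $V_n^k=|\mathcal{V}_n^k|$ with $V_n^k/n\to v^k\in(0,\infty)$. The graph $\mathcal{G}_n$ is a stochastic block model: each unordered pair of distinct nodes is an edge independently with probability $p_n(k,l)$ for nodes in $\mathcal{V}_n^k$ and $\mathcal{V}_n^l$, where $p_n(k,k)=a_n=a\lambda_n/n$ and $p_n(k,l)=b_n=b\lambda_n/n$ for $k\ne l$, with constants $a>b>0$ and $\lambda_n\to\infty$. For a configuration $\sigma:\mathcal{V}_n\to\{-1,1\}$ and $s\in\{-,+\}$, $\mathcal{Y}_s^k(\sigma)=\{v\in\mathcal{V}_n^k:\sigma(v)=s1\}$, $Y_s^k(\sigma)=|\mathcal{Y}_s^k(\sigma)|$, and $\hat Y_s^k(\sigma,u)$ is the number of neighbors of $u$ in $\mathcal{Y}_s^k(\sigma)$. Magnetization: $z^k(\sigma)=\frac1{V_n^k}\sum_{u\in\mathcal{V}_n^k}\sigma(u)$, $z(\sigma)=(z^1(\sigma),z^2(\sigma))$. For a constant $\alpha\in\mathbb{R}$ and $\bar k=3-k$, let $\mathcal{L}^k(z)=(a-\alpha)v^kz^k+(b-\alpha)v^{\bar k}z^{\bar k}$ for $z\in\mathbb{R}^2$. For $\zeta>0$, $\xi\in(0,1)$: $\mathcal{A}(\zeta,\xi)=\{z\in[-1+\xi,1-\xi]^2:\min\{\mathcal{L}^1(z),-\mathcal{L}^2(z)\}\ge\zeta\}$ and $\Sigma_n(\zeta,\xi)=\{\sigma:\mathcal{V}_n\to\{-1,1\}\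 :\ z(\sigma)\in\mathcal{A}(\zeta,\xi)\}$. $\Rightarrow$ denotes weak convergence (here to the constant $0$). *)

theory Defs
  imports "HOL-Probability.Probability"
begin

definition community :: "nat \<Rightarrow> nat \<Rightarrow> nat \<Rightarrow> nat set" where
  "community V1 V2 k = (if k = 1 then {0..<V1} else if k = 2 then {V1..<V1+V2} else {})"

definition comm :: "nat \<Rightarrow> nat \<Rightarrow> nat" where
  "comm V1 v = (if v < V1 then 1 else 2)"

definition sbm_p :: "real \<Rightarrow> real \<Rightarrow> real \<Rightarrow> nat \<Rightarrow> nat \<Rightarrow> nat \<Rightarrow> real" where
  "sbm_p a b lam n k l = (if k = l then a * lam / real n else b * lam / real n)"

(* unordered pairs of distinct nodes, represented as (i,j) with i<j *)
definition node_pairs :: "nat \<Rightarrow> (nat \<times> nat) set" where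
  "node_pairs N = {(i,j). i < j \<and> j < N}"

definition sbm :: "real \<Rightarrow> real \<Rightarrow> real \<Rightarrow> nat \<Rightarrow> nat \<Rightarrow> nat \<Rightarrow> (nat \<times> nat \<Rightarrow> bool) pmf" where
  "sbm a b lam n V1 V2 = Pi_pmf (node_pairs (V1 + V2)) False
     (\<lambda>(i,j). bernoulli_pmf (sbm_p a b lam n (comm V1 i) (comm V1 j)))"

definition adj :: "(nat \<times> nat \<Rightarrow> bool) \<Rightarrow> nat \<Rightarrow> nat \<Rightarrow> bool" where
  "adj G u w = (if u < w then G (u,w) else if w < u then G (w,u) else False)"

definition configs :: "nat \<Rightarrow> (nat \<Rightarrow> int) set" where
  "configs N = {\<sigma>. (\<forall>v<N. \<sigma> v \<in> {-1, 1}) \<and> (\<forall>v\<ge>N. \<sigma> v = 1)}"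

definition Yset :: "nat \<Rightarrow> nat \<Rightarrow> (nat \<Rightarrow> int) \<Rightarrow> int \<Rightarrow> nat \<Rightarrow> nat set" where
  "Yset V1 V2 \<sigma> s k = {v \<in> community V1 V2 k. \<sigma> v = s}"

definition Yhat :: "(nat \<times> nat \<Rightarrow> bool) \<Rightarrow> nat \<Rightarrow> nat \<Rightarrow> (nat \<Rightarrow> int) \<Rightarrow> int \<Rightarrow> nat \<Rightarrow> nat \<Rightarrow> nat" where
  "Yhat G V1 V2 \<sigma> s k u = card {v \<in> Yset V1 V2 \<sigma> s k. adj G u v}"

definition magn :: "nat \<Rightarrow> nat \<Rightarrow> (nat \<Rightarrow> int) \<Rightarrow> nat \<Rightarrow> real" where
  "magn V1 V2 \<sigma> k = (\<Sum>u\<in>community V1 V2 k. real_of_int (\<sigma> u)) / real (card (community V1 V2 k))"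

(* L^k(z) with v, z indexed by 1,2 *)
definition sbmL :: "real \<Rightarrow> real \<Rightarrow> real \<Rightarrow> (nat \<Rightarrow> real) \<Rightarrow> (nat \<Rightarrow> real) \<Rightarrow> nat \<Rightarrow> real" where
  "sbmL a b \<alpha> v z k = (a - \<alpha>) * v k * z k + (b - \<alpha>) * v (3 - k) * z (3 - k)"

definition inA :: "real \<Rightarrow> real \<Rightarrow> real \<Rightarrow> (nat \<Rightarrow> real) \<Rightarrow> real \<Rightarrow> real \<Rightarrow> (nat \<Rightarrow> real) \<Rightarrow> bool" where
  "inA a b \<alpha> v \<zeta> \<xi> z \<longleftrightarrow>
     (\<forall>k\<in>{1,2}. -1 + \<xi> \<le> z k \<and> z k \<le> 1 - \<xi>) \<and>
     min (sbmL a b \<alpha> v z 1) (- sbmL a b \<alpha> v z 2) \<ge> \<zeta>"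

definition SigmaA :: "real \<Rightarrow> real \<Rightarrow> real \<Rightarrow> (nat \<Rightarrow> real) \<Rightarrow> real \<Rightarrow> real \<Rightarrow> nat \<Rightarrow> nat \<Rightarrow> (nat \<Rightarrow> int) set" where
  "SigmaA a b \<alpha> v \<zeta> \<xi> V1 V2 =
     {\<sigma> \<in> configs (V1 + V2). inA a b \<alpha> v \<zeta> \<xi> (\<lambda>k. magn V1 V2 \<sigma> k)}"

definition Bevent :: "real \<Rightarrow> real \<Rightarrow> real \<Rightarrow> nat \<Rightarrow> nat \<Rightarrow> nat \<Rightarrow> real \<Rightarrow> (nat \<times> nat \<Rightarrow> bool)
    \<Rightarrow> (nat \<Rightarrow> int) \<Rightarrow> nat \<Rightarrow> nat \<Rightarrow> int \<Rightarrow> nat \<Rightarrow> bool" where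
  "Bevent a b lam n V1 V2 \<delta> G \<sigma> k l t u \<longleftrightarrow>
     \<bar>real (Yhat G V1 V2 \<sigma> t l u) - sbm_p a b lam n k l * real (card (Yset V1 V2 \<sigma> t l))\<bar>
       \<ge> sqrt (sbm_p a b lam n k l * real (card (Yset V1 V2 \<sigma> t l)) * \<delta>)"

(* max over Sigma_n(zeta,xi_n) of (gamma_n/n) * sum_{u in Y_s^k} 1{B}; max of empty set read as 0 *)
definition maxstat :: "real \<Rightarrow> real \<Rightarrow> real \<Rightarrow> (nat \<Rightarrow> real) \<Rightarrow> real \<Rightarrow> real \<Rightarrow> real \<Rightarrow> real \<Rightarrow> real
    \<Rightarrow> nat \<Rightarrow> nat \<Rightarrow> nat \<Rightarrow> nat \<Rightarrow> nat \<Rightarrow> int \<Rightarrow> int \<Rightarrow> (nat \<times> nat \<Rightarrow> bool) \<Rightarrow> real" where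
  "maxstat a b \<alpha> v \<zeta> \<xi> lam \<gamma> \<delta> n V1 V2 k l s t G =
     Max (insert 0 ((\<lambda>\<sigma>. \<gamma> / real n *
        real (card {u \<in> Yset V1 V2 \<sigma> s k. Bevent a b lam n V1 V2 \<delta> G \<sigma> k l t u}))
       ` SigmaA a b \<alpha> v \<zeta> \<xi> V1 V2))"

end

theory Submission
  imports Defs
begin

text \<open>
  Call a vertex u of Y_s^k(\<sigma>) bad when its number of neighbours in Y_t^l(\<sigma>) deviates from
  the mean \<mu> = p_n(k,l) |Y_t^l(\<sigma>)| by at least sqrt(\<mu> \<delta>_n). As (k,s) \<noteq> (l,t), the two sets are
  disjoint, so these degrees are sums over distinct independent edges, and a Bernstein-type
  Chernoff bound shows that a fixed set S of vertices all deviating in prescribed directions has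
  probability at most exp(-|S| \<delta>_n/4), provided \<mu> \<ge> 4 \<delta>_n. A union bound over the at most 2^N
  configurations and 4^N choices of S and directions with |S| > \<epsilon> n/\<gamma>_n bounds the probability
  that the statistic exceeds \<epsilon> by 8^N exp(-\<epsilon> n \<delta>_n / (4 \<gamma>_n)), where N = V_n^1 + V_n^2 = O(n).
  On \<Sigma>_n(\<zeta>, \<xi>_n) the magnetisation bound gives |Y_t^l(\<sigma>)| \<ge> \<xi>_n V_n^l / 2, so \<mu> is of order
  \<xi>_n \<lambda>_n, which dominates \<delta>_n; and \<delta>_n/\<gamma>_n \<rightarrow> \<infinity> makes the bound vanish.
\<close>

lemma exp_le_one_plus_x_plus_sq:
  fixes y :: real
  assumes "\<bar>y\<bar> \<le> 1"
  shows "exp y \<le> 1 + y + y\<^sup>2"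
proof (cases "y \<ge> 0")
  case True
  then show ?thesis using exp_bound assms by auto
next
  case False
  define z where "z = - y"
  have z: "0 \<le> z" "z \<le> 1" using False assms by (auto simp: z_def)
  have nonneg: "0 \<le> 1 - z + z\<^sup>2"
    using z zero_le_power2[of z] by linarith
  have "1 \<le> (1 + z) * (1 - z + z\<^sup>2)"
    using z by (simp add: algebra_simps power2_eq_square power3_eq_cube)
  also have "\<dots> \<le> exp z * (1 - z + z\<^sup>2)"
    using nonneg exp_ge_add_one_self[of z] by (intro mult_right_mono) auto
  finally have "exp (- z) \<le> 1 - z + z\<^sup>2"
    by (simp add: exp_minus field_simps)
  then show ?thesis by (simp add: z_def)
qed

lemma bernoulli_centred_mgf_le:
  fixes r y :: real
  assumes r: "0 \<le> r" "r \<le> 1" and y: "\<bar>y\<bar> \<le> 1"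
  shows "measure_pmf.expectation (bernoulli_pmf r) (\<lambda>x. exp (y * (of_bool x - r))) \<le> exp (r * y\<^sup>2)"
proof -
  have "measure_pmf.expectation (bernoulli_pmf r) (\<lambda>x. exp (y * (of_bool x - r)))
      = exp (- (y * r)) * (r * exp y + (1 - r))"
    using r by (simp add: algebra_simps flip: exp_add)
  also have "\<dots> \<le> exp (- (y * r)) * (1 + r * (y + y\<^sup>2))"
    using mult_left_mono[OF exp_le_one_plus_x_plus_sq[OF y] r(1)]
    by (intro mult_left_mono) (auto simp: algebra_simps)
  also have "\<dots> \<le> exp (- (y * r)) * exp (r * (y + y\<^sup>2))"
    by (intro mult_left_mono exp_ge_add_one_self) auto
  also have "\<dots> = exp (r * y\<^sup>2)"
    by (simp add: algebra_simps flip: exp_add)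
  finally show ?thesis .
qed

lemma expectation_prod_Pi_pmf_inj_on:
  fixes g :: "'i \<Rightarrow> 'b \<Rightarrow> real" and e :: "'i \<Rightarrow> 'a"
  assumes "finite E" "inj_on e I" "e ` I \<subseteq> E"
    and "\<And>i. i \<in> I \<Longrightarrow> integrable (measure_pmf (q (e i))) (g i)"
    and "\<And>i y. i \<in> I \<Longrightarrow> y \<in> set_pmf (q (e i)) \<Longrightarrow> 0 \<le> g i y"
  shows "measure_pmf.expectation (Pi_pmf E dflt q) (\<lambda>G. \<Prod>i\<in>I. g i (G (e i)))
       = (\<Prod>i\<in>I. measure_pmf.expectation (q (e i)) (g i))"
proof -
  define f where "f x = (if x \<in> e ` I then g (inv_into I e x) else (\<lambda>_. 1))" for x
  have reindex: "(\<Prod>i\<in>I. h i (e i)) = (\<Prod>x\<in>E. f' x)"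
    if "\<And>x. f' x = (if x \<in> e ` I then h (inv_into I e x) x else 1)" for h :: "'i \<Rightarrow> 'a \<Rightarrow> real" and f'
  proof -
    have "(\<Prod>i\<in>I. h i (e i)) = (\<Prod>x\<in>e ` I. h (inv_into I e x) x)"
      using assms(2) by (simp add: prod.reindex)
    also have "\<dots> = (\<Prod>x\<in>E. f' x)"
      using assms(1,3) that by (intro prod.mono_neutral_cong_left) auto
    finally show ?thesis .
  qed
  have "measure_pmf.expectation (Pi_pmf E dflt q) (\<lambda>G. \<Prod>i\<in>I. g i (G (e i)))
      = measure_pmf.expectation (Pi_pmf E dflt q) (\<lambda>G. \<Prod>x\<in>E. f x (G x))"
    by (intro Bochner_Integration.integral_cong refl reindex) (simp add: f_def)
  also have "\<dots> = (\<Prod>x\<in>E. measure_pmf.expectation (q x) (f x))"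
    using assms(1,2,4,5) by (intro expectation_prod_Pi_pmf) (auto simp: f_def)
  also have "\<dots> = (\<Prod>i\<in>I. measure_pmf.expectation (q (e i)) (g i))"
    by (rule reindex[symmetric]) (simp add: f_def)
  finally show ?thesis .
qed

definition node_pair :: "nat \<Rightarrow> nat \<Rightarrow> nat \<times> nat" where
  "node_pair u v = (min u v, max u v)"

lemma adj_eq_node_pair: "u \<noteq> v \<Longrightarrow> adj G u v = G (node_pair u v)"
  by (auto simp: adj_def node_pair_def)

lemma inj_on_node_pair:
  assumes "S \<inter> W = {}"
  shows "inj_on (\<lambda>(u, v). node_pair u v) (S \<times> W)"
  using assms by (auto simp: inj_on_def node_pair_def min_def max_def split: if_splits)

lemma node_pair_in_node_pairs:
  "u < N \<Longrightarrow> v < N \<Longrightarrow> u \<noteq> v \<Longrightarrow> node_pair u v \<in> node_pairs N"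
  by (auto simp: node_pairs_def node_pair_def min_def max_def)

lemma finite_node_pairs: "finite (node_pairs N)"
  by (rule finite_subset[of _ "{..<N} \<times> {..<N}"]) (auto simp: node_pairs_def)

lemma finite_set_pmf_sbm: "finite (set_pmf (sbm a b lam n V1 V2))"
proof (rule finite_subset)
  show "set_pmf (sbm a b lam n V1 V2) \<subseteq> PiE_dflt (node_pairs (V1 + V2)) False (\<lambda>_. UNIV)"
    unfolding sbm_def using set_Pi_pmf_subset'[OF finite_node_pairs] by (fastforce simp: PiE_dflt_def)
qed (auto intro: finite_node_pairs)

lemma community_less: "u \<in> community V1 V2 k \<Longrightarrow> u < V1 + V2"
  by (auto simp: community_def split: if_splits)

lemma finite_community: "finite (community V1 V2 k)"
  by (auto simp: community_def)

lemma card_community: "l \<in> {1, 2} \<Longrightarrow> card (community V1 V2 l) = (if l = 1 then V1 else V2)"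
  by (auto simp: community_def)

lemma comm_community: "k \<in> {1, 2} \<Longrightarrow> u \<in> community V1 V2 k \<Longrightarrow> comm V1 u = k"
  by (auto simp: comm_def community_def)

lemma sbm_p_node_pair:
  assumes "k \<in> {1, 2}" "l \<in> {1, 2}" "u \<in> community V1 V2 k" "v \<in> community V1 V2 l"
  shows "(case node_pair u v of (i, j) \<Rightarrow> sbm_p a b lam n (comm V1 i) (comm V1 j)) = sbm_p a b lam n k l"
  using assms comm_community[OF assms(1,3)] comm_community[OF assms(2,4)]
  by (auto simp: node_pair_def sbm_p_def min_def max_def)

lemma sbm_signed_edge_sum_mgf_le:
  fixes S W :: "nat set" and c :: "nat \<Rightarrow> real" and a b lam \<theta> :: real and n k l V1 V2 :: nat
  defines "p \<equiv> sbm_p a b lam n k l"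
  assumes kl: "k \<in> {1, 2}" "l \<in> {1, 2}"
    and SW: "S \<subseteq> community V1 V2 k" "W \<subseteq> community V1 V2 l" "S \<inter> W = {}"
    and c: "\<And>u. \<bar>c u\<bar> \<le> 1" and \<theta>: "0 \<le> \<theta>" "\<theta> \<le> 1" and p: "0 \<le> p" "p \<le> 1"
  shows "measure_pmf.expectation (sbm a b lam n V1 V2)
           (\<lambda>G. exp (\<theta> * (\<Sum>(u, v)\<in>S \<times> W. c u * (of_bool (adj G u v) - p))))
         \<le> exp (p * \<theta>\<^sup>2 * real (card S * card W))"
proof -
  define q where "q = (\<lambda>(i, j). bernoulli_pmf (sbm_p a b lam n (comm V1 i) (comm V1 j)))"
  define e where "e = (\<lambda>(u, v). node_pair u v)"
  define g :: "nat \<times> nat \<Rightarrow> bool \<Rightarrow> real" where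
    "g = (\<lambda>(u, v) x. exp (\<theta> * c u * (of_bool x - p)))"
  have distinct: "u \<noteq> v" if "u \<in> S" "v \<in> W" for u v
    using SW(3) that by blast
  have fin: "finite (S \<times> W)"
    using SW finite_community finite_subset by blast
  have edge_in: "e ` (S \<times> W) \<subseteq> node_pairs (V1 + V2)"
  proof -
    have "node_pair u v \<in> node_pairs (V1 + V2)" if "u \<in> S" "v \<in> W" for u v
      using that SW by (intro node_pair_in_node_pairs community_less distinct) auto
    then show ?thesis by (auto simp: e_def)
  qed
  have edge_prob: "q (e uv) = bernoulli_pmf p" if uv: "uv \<in> S \<times> W" for uv
  proof -
    obtain u v where "uv = (u, v)" "u \<in> community V1 V2 k" "v \<in> community V1 V2 l"
      using uv SW by blast
    then show ?thesis
      using sbm_p_node_pair[OF kl] by (simp add: q_def e_def p_def case_prod_unfold)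
  qed
  have g_nonneg: "0 \<le> g uv x" for uv x
    by (simp add: g_def case_prod_unfold)
  have "measure_pmf.expectation (sbm a b lam n V1 V2)
           (\<lambda>G. exp (\<theta> * (\<Sum>(u, v)\<in>S \<times> W. c u * (of_bool (adj G u v) - p))))
      = measure_pmf.expectation (Pi_pmf (node_pairs (V1 + V2)) False q)
           (\<lambda>G. \<Prod>uv\<in>S \<times> W. g uv (G (e uv)))"
    unfolding sbm_def q_def[symmetric]
  proof (intro Bochner_Integration.integral_cong refl)
    fix G
    have "exp (\<theta> * (\<Sum>(u, v)\<in>S \<times> W. c u * (of_bool (adj G u v) - p)))
        = (\<Prod>(u, v)\<in>S \<times> W. exp (\<theta> * c u * (of_bool (adj G u v) - p)))"
      using fin by (simp add: exp_sum sum_distrib_left case_prod_unfold mult.assoc)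
    also have "\<dots> = (\<Prod>uv\<in>S \<times> W. g uv (G (e uv)))"
      by (intro prod.cong refl) (auto simp: g_def e_def adj_eq_node_pair distinct)
    finally show "exp (\<theta> * (\<Sum>(u, v)\<in>S \<times> W. c u * (of_bool (adj G u v) - p)))
        = (\<Prod>uv\<in>S \<times> W. g uv (G (e uv)))" .
  qed
  also have "\<dots> = (\<Prod>uv\<in>S \<times> W. measure_pmf.expectation (q (e uv)) (g uv))"
    using inj_on_node_pair[OF SW(3)] edge_in
    by (intro expectation_prod_Pi_pmf_inj_on finite_node_pairs integrable_measure_pmf_finite g_nonneg)
       (auto simp: e_def edge_prob)
  also have "\<dots> \<le> (\<Prod>uv\<in>S \<times> W. exp (p * \<theta>\<^sup>2))"
  proof (intro prod_mono conjI)
    fix uv assume uv_in: "uv \<in> S \<times> W"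
    then obtain u v where uv: "uv = (u, v)" by auto
    show "0 \<le> measure_pmf.expectation (q (e uv)) (g uv)"
      by (intro Bochner_Integration.integral_nonneg g_nonneg)
    have small: "\<bar>\<theta> * c u\<bar> \<le> 1"
      using \<theta> c[of u] by (simp add: abs_mult mult_le_one)
    have "measure_pmf.expectation (q (e uv)) (g uv) \<le> exp (p * (\<theta> * c u)\<^sup>2)"
      using bernoulli_centred_mgf_le[OF p small] uv_in by (simp add: edge_prob uv g_def)
    also have "(\<theta> * c u)\<^sup>2 \<le> \<theta>\<^sup>2"
      using c[of u] by (simp add: power_mult_distrib abs_square_le_1 mult_left_le)
    then have "exp (p * (\<theta> * c u)\<^sup>2) \<le> exp (p * \<theta>\<^sup>2)"
      using p(1) by (simp add: mult_left_mono)
    finally show "measure_pmf.expectation (q (e uv)) (g uv) \<le> exp (p * \<theta>\<^sup>2)" .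
  qed
  also have "\<dots> = exp (p * \<theta>\<^sup>2 * real (card S * card W))"
    by (simp add: card_cartesian_product exp_of_nat_mult[symmetric] mult.commute)
  finally show ?thesis .
qed

lemma sbm_signed_degree_deviation_prob_le:
  fixes S W :: "nat set" and c :: "nat \<Rightarrow> real" and a b lam \<delta> :: real and n k l V1 V2 :: nat
  defines "p \<equiv> sbm_p a b lam n k l" and "\<mu> \<equiv> sbm_p a b lam n k l * real (card W)"
  assumes kl: "k \<in> {1, 2}" "l \<in> {1, 2}"
    and SW: "S \<subseteq> community V1 V2 k" "W \<subseteq> community V1 V2 l" "S \<inter> W = {}"
    and c: "\<And>u. \<bar>c u\<bar> \<le> 1" and p: "0 \<le> p" "p \<le> 1" and \<delta>: "0 < \<delta>" "4 * \<delta> \<le> \<mu>"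
  shows "measure_pmf.prob (sbm a b lam n V1 V2)
     {G. real (card S) * sqrt (\<mu> * \<delta>) \<le> (\<Sum>u\<in>S. c u * (real (card {v \<in> W. adj G u v}) - \<mu>))}
     \<le> exp (- (real (card S) * \<delta> / 4))"
proof -
  let ?M = "sbm a b lam n V1 V2"
  define X where "X G = (\<Sum>(u, v)\<in>S \<times> W. c u * (of_bool (adj G u v) - p))" for G
  define t where "t = real (card S) * sqrt (\<mu> * \<delta>)"
  \<comment> \<open>This \<theta> minimises the Chernoff exponent; 4 \<delta> \<le> \<mu> keeps it in the range of the mgf bound.\<close>
  define \<theta> where "\<theta> = sqrt (\<delta> / \<mu>) / 2"
  have \<mu>_pos: "0 < \<mu>" using \<delta> by linarith
  have "sqrt (\<delta> / \<mu>) \<le> 1"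
    using \<delta> \<mu>_pos by (simp add: divide_le_eq)
  moreover have "0 < sqrt (\<delta> / \<mu>)"
    using \<delta> \<mu>_pos by simp
  ultimately have \<theta>: "0 < \<theta>" "\<theta> \<le> 1"
    unfolding \<theta>_def by linarith+
  have finW: "finite W"
    using SW(2) finite_community finite_subset by blast
  have degree_sum: "(\<Sum>u\<in>S. c u * (real (card {v \<in> W. adj G u v}) - \<mu>)) = X G" for G
  proof -
    have "real (card {v \<in> W. adj G u v}) - \<mu> = (\<Sum>v\<in>W. of_bool (adj G u v) - p)" for u
      using finW by (simp add: \<mu>_def p_def sum_subtractf of_bool_def sum.If_cases Int_def conj_commute)
    then show ?thesis
      by (simp add: X_def sum.cartesian_product sum_distrib_left case_prod_beta)
  qed
  have "measure_pmf.prob ?M {G. t \<le> X G} \<le> exp (- \<theta> * t) * measure_pmf.expectation ?M (\<lambda>G. exp (\<theta> * X G))"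
    using measure_pmf.Chernoff_ineq_ge[of \<theta> ?M UNIV X t] \<theta>
    by (simp add: set_integrable_def set_lebesgue_integral_def integrable_measure_pmf_finite finite_set_pmf_sbm)
  also have "\<dots> \<le> exp (- \<theta> * t) * exp (p * \<theta>\<^sup>2 * real (card S * card W))"
    unfolding X_def p_def
    by (intro mult_left_mono sbm_signed_edge_sum_mgf_le kl SW c) (use \<theta> p in \<open>auto simp: p_def\<close>)
  also have "\<dots> = exp (- (real (card S) * \<delta> / 4))"
  proof -
    have "\<theta> * t = real (card S) * \<delta> / 2"
      using \<delta> \<mu>_pos by (simp add: \<theta>_def t_def real_sqrt_mult[symmetric] field_simps)
    moreover have "p * \<theta>\<^sup>2 * real (card S * card W) = real (card S) * \<delta> / 4"
    proof -
      have \<theta>_sq: "\<theta>\<^sup>2 = \<delta> / \<mu> / 4"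
        using \<delta> \<mu>_pos by (simp add: \<theta>_def power_divide)
      have \<mu>_eq: "p * real (card W) = \<mu>"
        by (simp add: \<mu>_def p_def)
      have "p * \<theta>\<^sup>2 * real (card S * card W) = (p * real (card W)) * \<theta>\<^sup>2 * real (card S)"
        by (simp add: algebra_simps)
      also have "\<dots> = \<mu> * (\<delta> / \<mu> / 4) * real (card S)"
        by (simp only: \<mu>_eq \<theta>_sq)
      also have "\<dots> = real (card S) * \<delta> / 4"
        using \<mu>_pos by simp
      finally show ?thesis .
    qed
    ultimately have "- \<theta> * t + p * \<theta>\<^sup>2 * real (card S * card W) = - (real (card S) * \<delta> / 4)"
      by linarith
    then show ?thesis
      by (metis exp_add)
  qed
  finally show ?thesis
    by (simp add: degree_sum t_def)
qed

lemma sbm_many_deviating_degrees_prob_le: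
  fixes U W :: "nat set" and a b lam \<delta> x :: real and n k l V1 V2 :: nat
  defines "p \<equiv> sbm_p a b lam n k l" and "\<mu> \<equiv> sbm_p a b lam n k l * real (card W)"
  assumes kl: "k \<in> {1, 2}" "l \<in> {1, 2}"
    and UW: "U \<subseteq> community V1 V2 k" "W \<subseteq> community V1 V2 l" "U \<inter> W = {}"
    and p: "0 \<le> p" "p \<le> 1" and \<delta>: "0 < \<delta>" "4 * \<delta> \<le> \<mu>"
  shows "measure_pmf.prob (sbm a b lam n V1 V2)
     {G. x < real (card {u \<in> U. \<bar>real (card {v \<in> W. adj G u v}) - \<mu>\<bar> \<ge> sqrt (\<mu> * \<delta>)})}
     \<le> 4 ^ card U * exp (- (x * \<delta> / 4))"
proof -
  let ?M = "sbm a b lam n V1 V2"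
  define deg where "deg G u = real (card {v \<in> W. adj G u v})" for G u
  \<comment> \<open>S is the set of deviating vertices and T \<subseteq> S those deviating upwards.\<close>
  define J where "J = {(S, T). S \<subseteq> U \<and> T \<subseteq> S \<and> x < real (card S)}"
  define sign where "sign T u = (if u \<in> T then 1 else -1 :: real)" for T and u :: nat
  define A where "A = (\<lambda>(S, T). {G. real (card S) * sqrt (\<mu> * \<delta>) \<le> (\<Sum>u\<in>S. sign T u * (deg G u - \<mu>))})"
  have finU: "finite U"
    using UW(1) finite_community finite_subset by blast
  have J_sub: "J \<subseteq> Pow U \<times> Pow U" by (auto simp: J_def)
  have card_J: "card J \<le> 4 ^ card U"
  proof -
    have "card J \<le> card (Pow U \<times> Pow U)"
      using J_sub finU by (intro card_mono) auto
    also have "\<dots> = 4 ^ card U"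
      using finU by (simp add: card_cartesian_product card_Pow flip: power_mult_distrib)
    finally show ?thesis .
  qed
  have cover: "{G. x < real (card {u \<in> U. \<bar>deg G u - \<mu>\<bar> \<ge> sqrt (\<mu> * \<delta>)})} \<subseteq> (\<Union>i\<in>J. A i)"
  proof
    fix G assume "G \<in> {G. x < real (card {u \<in> U. \<bar>deg G u - \<mu>\<bar> \<ge> sqrt (\<mu> * \<delta>)})}"
    then have many: "x < real (card {u \<in> U. \<bar>deg G u - \<mu>\<bar> \<ge> sqrt (\<mu> * \<delta>)})" by simp
    define S where "S = {u \<in> U. \<bar>deg G u - \<mu>\<bar> \<ge> sqrt (\<mu> * \<delta>)}"
    define T where "T = {u \<in> S. deg G u \<ge> \<mu>}"
    have "(\<Sum>u\<in>S. sqrt (\<mu> * \<delta>)) \<le> (\<Sum>u\<in>S. sign T u * (deg G u - \<mu>))"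
      by (intro sum_mono) (auto simp: S_def T_def sign_def abs_if)
    then have "G \<in> A (S, T)" by (simp add: A_def)
    moreover have "(S, T) \<in> J" using many by (auto simp: J_def S_def T_def)
    ultimately show "G \<in> (\<Union>i\<in>J. A i)" by blast
  qed
  have "measure_pmf.prob ?M {G. x < real (card {u \<in> U. \<bar>deg G u - \<mu>\<bar> \<ge> sqrt (\<mu> * \<delta>)})}
      \<le> measure_pmf.prob ?M (\<Union>i\<in>J. A i)"
    by (rule measure_pmf.finite_measure_mono[OF cover]) simp
  also have "\<dots> \<le> (\<Sum>i\<in>J. measure_pmf.prob ?M (A i))"
    using J_sub finU by (intro measure_UNION_le finite_subset[OF J_sub]) auto
  also have "\<dots> \<le> (\<Sum>i\<in>J. exp (- (x * \<delta> / 4)))"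
  proof (intro sum_mono)
    fix i assume "i \<in> J"
    then obtain S T where i: "i = (S, T)" "S \<subseteq> U" "T \<subseteq> S" "x < real (card S)"
      by (auto simp: J_def)
    have "measure_pmf.prob ?M (A i) \<le> exp (- (real (card S) * \<delta> / 4))"
      unfolding i(1) A_def prod.case deg_def
      by (rule sbm_signed_degree_deviation_prob_le[OF kl _ UW(2) _ _ p[unfolded p_def] \<delta>[unfolded \<mu>_def p_def],
            folded p_def \<mu>_def]) (use i UW in \<open>auto simp: sign_def\<close>)
    also have "\<dots> \<le> exp (- (x * \<delta> / 4))"
      using i(4) \<delta>(1) by (simp add: mult_right_mono)
    finally show "measure_pmf.prob ?M (A i) \<le> exp (- (x * \<delta> / 4))" .
  qed
  also have "\<dots> \<le> 4 ^ card U * exp (- (x * \<delta> / 4))"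
    using card_J by (simp add: mult_right_mono flip: of_nat_power)
  finally show ?thesis
    by (simp add: deg_def)
qed

lemma finite_configs_card_le: "finite (configs N) \<and> card (configs N) \<le> 2 ^ N"
proof -
  define pos where "pos \<sigma> = {v \<in> {..<N}. \<sigma> v = 1}" for \<sigma> :: "nat \<Rightarrow> int"
  have "inj_on pos (configs N)"
  proof (rule inj_onI, rule ext)
    fix \<sigma> \<sigma>' v assume \<sigma>: "\<sigma> \<in> configs N" "\<sigma>' \<in> configs N" "pos \<sigma> = pos \<sigma>'"
    show "\<sigma> v = \<sigma>' v"
    proof (cases "v < N")
      case True
      then have "\<sigma> v = 1 \<longleftrightarrow> \<sigma>' v = 1"
        using \<sigma>(3) by (auto simp: pos_def set_eq_iff)
      moreover have "\<sigma> v \<in> {-1, 1}" "\<sigma>' v \<in> {-1, 1}"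
        using \<sigma>(1,2) True by (auto simp: configs_def)
      ultimately show ?thesis by auto
    qed (use \<sigma> in \<open>auto simp: configs_def\<close>)
  qed
  moreover have "pos ` configs N \<subseteq> Pow {..<N}" by (auto simp: pos_def)
  ultimately show ?thesis
    using card_inj_on_le[of pos "configs N" "Pow {..<N}"] inj_on_finite[of pos "configs N" "Pow {..<N}"]
    by (simp add: card_Pow)
qed

lemma two_card_Yset:
  assumes "\<sigma> \<in> configs (V1 + V2)" "t \<in> {-1, 1}"
  shows "2 * real (card (Yset V1 V2 \<sigma> t l))
       = real (card (community V1 V2 l)) + of_int t * (\<Sum>u\<in>community V1 V2 l. of_int (\<sigma> u))"
proof -
  let ?C = "community V1 V2 l"
  have spin: "1 + of_int t * of_int (\<sigma> u) = (if \<sigma> u = t then 2 else 0 :: real)" if "u \<in> ?C" for u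
  proof -
    have "\<sigma> u \<in> {-1, 1}"
      using assms(1) community_less[OF that] by (auto simp: configs_def)
    then show ?thesis
      using assms(2) by auto
  qed
  have "real (card ?C) + of_int t * (\<Sum>u\<in>?C. of_int (\<sigma> u)) = (\<Sum>u\<in>?C. 1 + of_int t * of_int (\<sigma> u))"
    by (simp add: sum.distrib sum_distrib_left)
  also have "\<dots> = (\<Sum>u\<in>?C. if \<sigma> u = t then 2 else 0)"
    by (rule sum.cong) (simp_all add: spin)
  also have "\<dots> = 2 * real (card (Yset V1 V2 \<sigma> t l))"
    by (simp add: Yset_def sum.If_cases finite_community Int_def)
  finally show ?thesis ..
qed

lemma card_Yset_ge:
  assumes "\<sigma> \<in> configs (V1 + V2)" "t \<in> {-1, 1}"
    and "-1 + \<xi> \<le> magn V1 V2 \<sigma> l" "magn V1 V2 \<sigma> l \<le> 1 - \<xi>"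
  shows "\<xi> * real (card (community V1 V2 l)) / 2 \<le> real (card (Yset V1 V2 \<sigma> t l))"
proof (cases "card (community V1 V2 l) = 0")
  case False
  let ?C = "real (card (community V1 V2 l))"
  have "(\<Sum>u\<in>community V1 V2 l. of_int (\<sigma> u)) = magn V1 V2 \<sigma> l * ?C"
    using False by (simp add: magn_def)
  then have "2 * real (card (Yset V1 V2 \<sigma> t l)) = ?C + of_int t * magn V1 V2 \<sigma> l * ?C"
    using two_card_Yset[OF assms(1,2)] by simp
  moreover have "- (1 - \<xi>) \<le> of_int t * magn V1 V2 \<sigma> l"
    using assms(2-4) by auto
  ultimately show ?thesis
    using mult_right_mono[of "- (1 - \<xi>)" "of_int t * magn V1 V2 \<sigma> l" ?C] by (simp add: algebra_simps)
qed simp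

lemma maxstat_gt_obtains_config:
  assumes "0 \<le> \<epsilon>" "0 < \<gamma>" "\<epsilon> < \<bar>maxstat a b \<alpha> v \<zeta> \<xi> lam \<gamma> \<delta> n V1 V2 k l s t G\<bar>"
  obtains \<sigma> where "\<sigma> \<in> SigmaA a b \<alpha> v \<zeta> \<xi> V1 V2"
    "\<epsilon> * real n / \<gamma> < real (card {u \<in> Yset V1 V2 \<sigma> s k. Bevent a b lam n V1 V2 \<delta> G \<sigma> k l t u})"
proof -
  define f where
    "f \<sigma> = \<gamma> / real n * real (card {u \<in> Yset V1 V2 \<sigma> s k. Bevent a b lam n V1 V2 \<delta> G \<sigma> k l t u})"
    for \<sigma>
  let ?F = "insert 0 (f ` SigmaA a b \<alpha> v \<zeta> \<xi> V1 V2)"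
  have "finite (SigmaA a b \<alpha> v \<zeta> \<xi> V1 V2)"
    using finite_configs_card_le[of "V1 + V2"] by (auto simp: SigmaA_def intro: finite_subset)
  then have fin: "finite ?F" by simp
  have "\<epsilon> < \<bar>Max ?F\<bar>"
    using assms(3) by (simp add: maxstat_def f_def)
  moreover have "0 \<le> Max ?F"
    using fin by (intro Max_ge) auto
  ultimately have "\<epsilon> < Max ?F" by simp
  moreover have "Max ?F \<in> ?F"
    using fin by (intro Max_in) auto
  ultimately obtain \<sigma> where \<sigma>: "\<sigma> \<in> SigmaA a b \<alpha> v \<zeta> \<xi> V1 V2" "\<epsilon> < f \<sigma>"
    using assms(1) by auto
  then have "0 < real n"
    by (cases n) (use assms(1) in \<open>auto simp: f_def\<close>)
  with \<sigma>(2) assms(2) have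
    "\<epsilon> * real n / \<gamma> < real (card {u \<in> Yset V1 V2 \<sigma> s k. Bevent a b lam n V1 V2 \<delta> G \<sigma> k l t u})"
    by (simp add: f_def field_simps)
  with \<sigma>(1) show ?thesis by (rule that)
qed

lemma prob_maxstat_gt_le:
  fixes a b \<alpha> \<zeta> \<xi> lam \<gamma> \<delta> \<epsilon> :: real and v :: "nat \<Rightarrow> real" and n V1 V2 k l :: nat and s t :: int
  defines "p \<equiv> sbm_p a b lam n k l"
  assumes kl: "k \<in> {1, 2}" "l \<in> {1, 2}" and ne: "(k, s) \<noteq> (l, t)"
    and p: "0 \<le> p" "p \<le> 1" and pos: "0 < \<delta>" "0 < \<gamma>" "0 \<le> \<epsilon>"
    and dominant: "\<And>\<sigma>. \<sigma> \<in> SigmaA a b \<alpha> v \<zeta> \<xi> V1 V2 \<Longrightarrow> 4 * \<delta> \<le> p * real (card (Yset V1 V2 \<sigma> t l))"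
  shows "measure_pmf.prob (sbm a b lam n V1 V2)
            {G. \<epsilon> < \<bar>maxstat a b \<alpha> v \<zeta> \<xi> lam \<gamma> \<delta> n V1 V2 k l s t G\<bar>}
         \<le> 8 ^ (V1 + V2) * exp (- (real n * (\<epsilon> / 4 * (\<delta> / \<gamma>))))"
proof -
  let ?M = "sbm a b lam n V1 V2"
  let ?N = "V1 + V2"
  define \<Sigma> where "\<Sigma> = SigmaA a b \<alpha> v \<zeta> \<xi> V1 V2"
  define x where "x = \<epsilon> * real n / \<gamma>"
  define E where
    "E \<sigma> = {G. x < real (card {u \<in> Yset V1 V2 \<sigma> s k. Bevent a b lam n V1 V2 \<delta> G \<sigma> k l t u})}" for \<sigma>
  have \<Sigma>_sub: "\<Sigma> \<subseteq> configs ?N" by (auto simp: \<Sigma>_def SigmaA_def)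
  then have fin\<Sigma>: "finite \<Sigma>" and card\<Sigma>: "card \<Sigma> \<le> 2 ^ ?N"
    using finite_configs_card_le[of ?N] card_mono[OF _ \<Sigma>_sub] finite_subset[OF \<Sigma>_sub] by auto
  have cover: "{G. \<epsilon> < \<bar>maxstat a b \<alpha> v \<zeta> \<xi> lam \<gamma> \<delta> n V1 V2 k l s t G\<bar>} \<subseteq> (\<Union>\<sigma>\<in>\<Sigma>. E \<sigma>)"
    using maxstat_gt_obtains_config[OF pos(3,2)] by (auto simp: E_def x_def \<Sigma>_def) blast
  have E_le: "measure_pmf.prob ?M (E \<sigma>) \<le> 4 ^ ?N * exp (- (x * \<delta> / 4))" if "\<sigma> \<in> \<Sigma>" for \<sigma>
  proof -
    have disjoint: "Yset V1 V2 \<sigma> s k \<inter> Yset V1 V2 \<sigma> t l = {}"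
      using kl ne by (auto simp: Yset_def community_def split: if_splits)
    have "measure_pmf.prob ?M (E \<sigma>) \<le> 4 ^ card (Yset V1 V2 \<sigma> s k) * exp (- (x * \<delta> / 4))"
      unfolding E_def Bevent_def Yhat_def
      by (rule sbm_many_deviating_degrees_prob_le[OF kl _ _ disjoint p[unfolded p_def] pos(1)])
         (use dominant[of \<sigma>] that in \<open>auto simp: \<Sigma>_def p_def Yset_def\<close>)
    also have "\<dots> \<le> 4 ^ ?N * exp (- (x * \<delta> / 4))"
    proof -
      have "card (Yset V1 V2 \<sigma> s k) \<le> card {..<?N}"
        by (intro card_mono) (auto simp: Yset_def dest: community_less)
      then show ?thesis
        by (intro mult_right_mono power_increasing) auto
    qed
    finally show ?thesis .
  qed
  have "measure_pmf.prob ?M {G. \<epsilon> < \<bar>maxstat a b \<alpha> v \<zeta> \<xi> lam \<gamma> \<delta> n V1 V2 k l s t G\<bar>}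
      \<le> measure_pmf.prob ?M (\<Union>\<sigma>\<in>\<Sigma>. E \<sigma>)"
    by (rule measure_pmf.finite_measure_mono[OF cover]) simp
  also have "\<dots> \<le> (\<Sum>\<sigma>\<in>\<Sigma>. measure_pmf.prob ?M (E \<sigma>))"
    by (rule measure_UNION_le[OF fin\<Sigma>]) simp
  also have "\<dots> \<le> real (card \<Sigma>) * (4 ^ ?N * exp (- (x * \<delta> / 4)))"
    using sum_mono[of \<Sigma>, OF E_le] by simp
  also have "\<dots> \<le> 2 ^ ?N * (4 ^ ?N * exp (- (x * \<delta> / 4)))"
    using card\<Sigma> by (intro mult_right_mono) (auto simp flip: of_nat_power)
  also have "\<dots> = 8 ^ ?N * exp (- (x * \<delta> / 4))"
    by (simp flip: power_mult_distrib)
  also have "x * \<delta> / 4 = real n * (\<epsilon> / 4 * (\<delta> / \<gamma>))"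
    by (simp add: x_def field_simps)
  finally show ?thesis .
qed

lemma sbm_p_nonneg: "0 \<le> a \<Longrightarrow> 0 \<le> b \<Longrightarrow> 0 \<le> lam \<Longrightarrow> 0 \<le> sbm_p a b lam n k l"
  by (simp add: sbm_p_def)

lemma sbm_p_ge: "b \<le> a \<Longrightarrow> 0 \<le> lam \<Longrightarrow> b * lam / real n \<le> sbm_p a b lam n k l"
  by (simp add: sbm_p_def divide_right_mono mult_right_mono)

lemma sbm_p_le_one: "b \<le> a \<Longrightarrow> 0 \<le> lam \<Longrightarrow> a * lam \<le> real n \<Longrightarrow> sbm_p a b lam n k l \<le> 1"
  by (cases "n = 0")
     (auto simp: sbm_p_def divide_le_eq intro: order_trans[OF mult_right_mono[of b a lam]])

lemma power_mult_exp_tendsto_zero: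
  fixes N :: "nat \<Rightarrow> nat" and r :: "nat \<Rightarrow> real" and B C :: real
  assumes B: "1 \<le> B" and N: "eventually (\<lambda>n. real (N n) \<le> C * real n) sequentially"
    and r: "filterlim r at_top sequentially"
  shows "(\<lambda>n. B ^ N n * exp (- (real n * r n))) \<longlonglongrightarrow> 0"
proof (rule tendsto_sandwich)
  show "eventually (\<lambda>n. 0 \<le> B ^ N n * exp (- (real n * r n))) sequentially"
    using B by simp
  have "eventually (\<lambda>n. C * ln B \<le> r n) sequentially"
    using r by (simp add: filterlim_at_top)
  then show "eventually (\<lambda>n. B ^ N n * exp (- (real n * r n)) \<le> exp (C * ln B - r n)) sequentially"
    using N eventually_ge_at_top[of 1]
  proof eventually_elim
    case (elim n)
    have "B ^ N n = exp (real (N n) * ln B)"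
      using B by (simp add: exp_of_nat_mult)
    also have "\<dots> \<le> exp (C * real n * ln B)"
      using elim(2) B by (simp add: mult_right_mono)
    finally have "B ^ N n * exp (- (real n * r n)) \<le> exp (C * real n * ln B) * exp (- (real n * r n))"
      by (rule mult_right_mono) simp
    also have "\<dots> = exp (real n * (C * ln B - r n))"
      by (simp add: algebra_simps flip: exp_add)
    also have "\<dots> \<le> exp (C * ln B - r n)"
      using mult_right_mono_neg[of 1 "real n" "C * ln B - r n"] elim(1,3) by simp
    finally show ?case .
  qed
  have "filterlim (\<lambda>n. - (C * ln B) + r n) at_top sequentially"
    by (rule filterlim_tendsto_add_at_top[OF tendsto_const r])
  then have "filterlim (\<lambda>n. C * ln B - r n) at_bot sequentially"
    by (simp add: filterlim_uminus_at_bot)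
  then show "(\<lambda>n. exp (C * ln B - r n)) \<longlonglongrightarrow> 0"
    by (rule filterlim_compose[OF exp_at_bot])
qed (rule tendsto_const)

lemma eventually_expected_count_dominates:
  fixes V1 V2 :: "nat \<Rightarrow> nat" and v :: "nat \<Rightarrow> real" and a b \<alpha> \<zeta> :: real
    and lam \<delta> \<xi> :: "nat \<Rightarrow> real" and k l :: nat and t :: int
  assumes ab: "0 < b" "b \<le> a" and l: "l \<in> {1, 2}" and t: "t \<in> {-1, 1}" and v_l: "0 < v l"
    and C_lim: "(\<lambda>n. real (card (community (V1 n) (V2 n) l)) / real n) \<longlonglongrightarrow> v l"
    and lam: "filterlim lam at_top sequentially" and \<xi>: "\<And>n. 0 < \<xi> n"
    and \<delta>\<xi>lam: "(\<lambda>n. \<delta> n / (\<xi> n * lam n)) \<longlonglongrightarrow> 0"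
  shows "eventually (\<lambda>n. \<forall>\<sigma>\<in>SigmaA a b \<alpha> v \<zeta> (\<xi> n) (V1 n) (V2 n).
           4 * \<delta> n \<le> sbm_p a b (lam n) n k l * real (card (Yset (V1 n) (V2 n) \<sigma> t l))) sequentially"
proof -
  have "eventually (\<lambda>n. 0 < lam n) sequentially"
    using lam unfolding filterlim_at_top_dense by blast
  moreover have "eventually (\<lambda>n. v l / 2 < real (card (community (V1 n) (V2 n) l)) / real n) sequentially"
    by (rule order_tendstoD(1)[OF C_lim]) (use v_l in simp)
  moreover have "eventually (\<lambda>n. \<delta> n / (\<xi> n * lam n) < b * v l / 16) sequentially"
    by (rule order_tendstoD(2)[OF \<delta>\<xi>lam]) (use ab v_l in simp)
  ultimately show ?thesis
  proof eventually_elim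
    case (elim n)
    let ?C = "real (card (community (V1 n) (V2 n) l))"
    have n: "0 < real n"
      using elim(2) v_l by (cases n) auto
    have C: "v l / 2 * real n < ?C"
      using elim(2) n by (simp add: field_simps)
    have \<delta>_small: "4 * \<delta> n < b * v l * \<xi> n * lam n / 4"
      using elim(1,3) \<xi>[of n] by (simp add: field_simps)
    show ?case
    proof
      fix \<sigma> assume "\<sigma> \<in> SigmaA a b \<alpha> v \<zeta> (\<xi> n) (V1 n) (V2 n)"
      then have Y: "\<xi> n * ?C / 2 \<le> real (card (Yset (V1 n) (V2 n) \<sigma> t l))"
        using l by (intro card_Yset_ge t) (auto simp: SigmaA_def inA_def)
      have "4 * \<delta> n \<le> (b * lam n / real n) * (\<xi> n * (v l / 2 * real n) / 2)"
        using \<delta>_small n by (simp add: field_simps)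
      also have "\<dots> \<le> (b * lam n / real n) * (\<xi> n * ?C / 2)"
        using C ab elim(1) \<xi>[of n] by (intro mult_left_mono divide_right_mono) auto
      also have "\<dots> \<le> sbm_p a b (lam n) n k l * real (card (Yset (V1 n) (V2 n) \<sigma> t l))"
        using sbm_p_ge[OF ab(2), of "lam n" n k l] Y ab elim(1) \<xi>[of n]
        by (intro mult_mono) (auto intro: sbm_p_nonneg)
      finally show "4 * \<delta> n \<le> sbm_p a b (lam n) n k l * real (card (Yset (V1 n) (V2 n) \<sigma> t l))" .
    qed
  qed
qed

theorem lemmaB3:
  fixes V1 V2 :: "nat \<Rightarrow> nat" and v :: "nat \<Rightarrow> real"
    and a b \<alpha> \<zeta> :: real and lam \<gamma> \<delta> \<xi> :: "nat \<Rightarrow> real"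
    and k l :: nat and s t :: int
  assumes v_pos: "v 1 > 0" "v 2 > 0"
    and V1_lim: "(\<lambda>n. real (V1 n) / real n) \<longlonglongrightarrow> v 1"
    and V2_lim: "(\<lambda>n. real (V2 n) / real n) \<longlonglongrightarrow> v 2"
    and ab: "a > b" "b > 0"
    and lam_lim: "filterlim lam at_top sequentially"
    and p_le_1: "eventually (\<lambda>n. a * lam n \<le> real n) sequentially"
    and \<gamma>_pos: "\<And>n. \<gamma> n > 0" and \<delta>_pos: "\<And>n. \<delta> n > 0"
    and \<xi>_range: "\<And>n. 0 < \<xi> n \<and> \<xi> n < 1"
    and \<delta>_lim: "filterlim \<delta> at_top sequentially"
    and \<delta>\<xi>lam: "(\<lambda>n. \<delta> n / (\<xi> n * lam n)) \<longlonglongrightarrow> 0"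
    and \<delta>\<gamma>: "filterlim (\<lambda>n. \<delta> n / \<gamma> n) at_top sequentially"
    and \<zeta>_pos: "\<zeta> > 0"
    and kl: "k \<in> {1, 2}" "l \<in> {1, 2}"
    and st: "s \<in> {-1, 1}" "t \<in> {-1, 1}"
    and ne: "(k, s) \<noteq> (l, t)"
  shows "\<forall>\<epsilon>>0. (\<lambda>n. measure_pmf.prob (sbm a b (lam n) n (V1 n) (V2 n))
            {G. \<bar>maxstat a b \<alpha> v \<zeta> (\<xi> n) (lam n) (\<gamma> n) (\<delta> n) n (V1 n) (V2 n) k l s t G\<bar> > \<epsilon>})
          \<longlonglongrightarrow> 0"
proof (intro allI impI)
  fix \<epsilon> :: real assume \<epsilon>: "\<epsilon> > 0"
  have "(\<lambda>n. real (card (community (V1 n) (V2 n) l)) / real n) \<longlonglongrightarrow> v l"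
    using kl(2) V1_lim V2_lim by (auto simp: card_community)
  then have dominant: "eventually (\<lambda>n. \<forall>\<sigma>\<in>SigmaA a b \<alpha> v \<zeta> (\<xi> n) (V1 n) (V2 n).
      4 * \<delta> n \<le> sbm_p a b (lam n) n k l * real (card (Yset (V1 n) (V2 n) \<sigma> t l))) sequentially"
    using ab v_pos kl(2) \<xi>_range
    by (intro eventually_expected_count_dominates[OF _ _ _ st(2) _ _ lam_lim _ \<delta>\<xi>lam]) auto
  have bound: "eventually (\<lambda>n. measure_pmf.prob (sbm a b (lam n) n (V1 n) (V2 n))
      {G. \<epsilon> < \<bar>maxstat a b \<alpha> v \<zeta> (\<xi> n) (lam n) (\<gamma> n) (\<delta> n) n (V1 n) (V2 n) k l s t G\<bar>}
      \<le> 8 ^ (V1 n + V2 n) * exp (- (real n * (\<epsilon> / 4 * (\<delta> n / \<gamma> n))))) sequentially"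
    using dominant p_le_1 lam_lim[unfolded filterlim_at_top, rule_format, of 0]
    by eventually_elim
       (use ab \<epsilon> in \<open>intro prob_maxstat_gt_le kl ne sbm_p_nonneg sbm_p_le_one \<delta>_pos \<gamma>_pos; auto\<close>)
  have "eventually (\<lambda>n. real (V1 n + V2 n) / real n < v 1 + v 2 + 1) sequentially"
    using order_tendstoD(2)[OF tendsto_add[OF V1_lim V2_lim]] by (simp add: add_divide_distrib)
  then have size: "eventually (\<lambda>n. real (V1 n + V2 n) \<le> (v 1 + v 2 + 1) * real n) sequentially"
    using eventually_gt_at_top[of 0] by eventually_elim (simp add: divide_less_eq)
  have rate: "filterlim (\<lambda>n. \<epsilon> / 4 * (\<delta> n / \<gamma> n)) at_top sequentially"
    using \<epsilon> by (intro filterlim_tendsto_pos_mult_at_top[OF tendsto_const _ \<delta>\<gamma>]) simp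
  show "(\<lambda>n. measure_pmf.prob (sbm a b (lam n) n (V1 n) (V2 n))
          {G. \<bar>maxstat a b \<alpha> v \<zeta> (\<xi> n) (lam n) (\<gamma> n) (\<delta> n) n (V1 n) (V2 n) k l s t G\<bar> > \<epsilon>})
        \<longlonglongrightarrow> 0"
    by (rule tendsto_sandwich[OF _ bound tendsto_const power_mult_exp_tendsto_zero[OF _ size rate]])
       simp_all
qed

end
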